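(* Let $q\in\mathbb{C}\setminus\{0,1\}$. The left diagonal formal $q$-complex $0\to\mathbb{C}[[x_1,x_2]][[y]]\xrightarrow{d_y^0}\mathbb{C}[[x_1,x_2]][[y]]^{\oplus2}\xrightarrow{d_y^1}\mathbb{C}[[x_1,x_2]][[y]]\xrightarrow{\pi_y}\mathbb{C}[[x]]\to0$ and the right diagonal formal $q$-complex $0\to[[x]]\mathbb{C}[[y_1,y_2]]\xrightarrow{d_x^0}([[x]]\mathbb{C}[[y_1,y_2]])^{\oplus2}\xrightarrow{d_x^1}[[x]]\mathbb{C}[[y_1,y_2]]\xrightarrow{\pi_x}\mathbb{C}[[y]]\to0$ are exact.
   Context: $\mathbb{C}[[x_1,x_2]][[y]]$ is the Fréchet space of formal series $f=\sum_{n\ge0}f_n(x_1,x_2)y^n$ with $f_n\in\mathbb{C}[[x_1,x_2]]$ (product topology). Operators: $N_yf=\sum_{n\ge1}f_{n-1}y^n$, $D_{y,q}f=\sum_nq^nf_ny^n$, and $x_i$ acts by multiplication on the coefficients. $d_y^0f=(N_yf,\ (x_2-qx_1D_{y,q})f)$, $d_y^1(f,g)=(x_2-x_1D_{y,q})f-N_yg$, $\pi_y(\sum_nh_ny^n)=h_0(x,x)$. Symmetrically $[[x]]\mathbb{C}[[y_1,y_2]]$ consists of $f=\sum_{n\ge0}x^nf_n(y_1,y_2)$, with $N_xf=\sum_{n\ge1}x^nf_{n-1}$, $D_{x,q}f=\sum_nx^nq^nf_n$, $y_i$ acting by multiplication on coefficients; $d_x^0f=((y_1-qy_2D_{x,q})f,\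 N_xf)$, $d_x^1(f,g)=N_xf+(y_2D_{x,q}-y_1)g$, $\pi_x(\sum_nx^nh_n)=h_0(y,y)$. *)

theory Defs
  imports Complex_Main "HOL-Computational_Algebra.Formal_Power_Series" "HOL-Library.Function_Algebras" "HOL-Library.Product_Plus"
begin

text \<open>Left space C[[x1,x2]][[y]]: f n i j = coefficient of y^n x1^i x2^j.
  Right space [[x]]C[[y1,y2]]: f n i j = coefficient of x^n y1^i y2^j.\<close>

type_synonym ser3 = "nat \<Rightarrow> nat \<Rightarrow> nat \<Rightarrow> complex"

definition Nsh :: "ser3 \<Rightarrow> ser3" where
  "Nsh f = (\<lambda>n i j. if n = 0 then 0 else f (n - 1) i j)"

definition Dq :: "complex \<Rightarrow> ser3 \<Rightarrow> ser3" where
  "Dq q f = (\<lambda>n i j. q ^ n * f n i j)"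

definition mul1 :: "ser3 \<Rightarrow> ser3" where
  "mul1 f = (\<lambda>n i j. if i = 0 then 0 else f n (i - 1) j)"

definition mul2 :: "ser3 \<Rightarrow> ser3" where
  "mul2 f = (\<lambda>n i j. if j = 0 then 0 else f n i (j - 1))"

definition scal :: "complex \<Rightarrow> ser3 \<Rightarrow> ser3" where
  "scal c f = (\<lambda>n i j. c * f n i j)"

definition dy0 :: "complex \<Rightarrow> ser3 \<Rightarrow> ser3 \<times> ser3" where
  "dy0 q f = (Nsh f, mul2 f - scal q (mul1 (Dq q f)))"

definition dy1 :: "complex \<Rightarrow> ser3 \<times> ser3 \<Rightarrow> ser3" where
  "dy1 q fg = (mul2 (fst fg) - mul1 (Dq q (fst fg))) - Nsh (snd fg)"

(* h_0(x,x): coefficient of x^k is sum over i+j=k of coefficient of x1^i x2^j in h_0 *)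
definition piy :: "ser3 \<Rightarrow> complex fps" where
  "piy h = Abs_fps (\<lambda>k. \<Sum>i\<le>k. h 0 i (k - i))"

definition dx0 :: "complex \<Rightarrow> ser3 \<Rightarrow> ser3 \<times> ser3" where
  "dx0 q f = (mul1 f - scal q (mul2 (Dq q f)), Nsh f)"

definition dx1 :: "complex \<Rightarrow> ser3 \<times> ser3 \<Rightarrow> ser3" where
  "dx1 q fg = Nsh (fst fg) + (mul2 (Dq q (snd fg)) - mul1 (snd fg))"

definition pix :: "ser3 \<Rightarrow> complex fps" where
  "pix h = Abs_fps (\<lambda>k. \<Sum>i\<le>k. h 0 i (k - i))"

definition exact4 :: "('a \<Rightarrow> 'b::zero) \<Rightarrow> ('b \<Rightarrow> 'c::zero) \<Rightarrow> ('c \<Rightarrow> 'd::zero) \<Rightarrow> bool" where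
  "exact4 d0 d1 p \<longleftrightarrow> inj d0 \<and> range d0 = {v. d1 v = 0} \<and> range d1 = {h. p h = 0} \<and> surj p"

end

theory Submission
  imports Defs
begin

text \<open>In degree zero in the outer variable, d1 is multiplication by x2 - x1 on C[[x1,x2]],
  and 0 \<rightarrow> C[[x1,x2]] \<rightarrow> C[[x1,x2]] \<rightarrow> C[[x]] \<rightarrow> 0 (multiplication by x2 - x1, then
  restriction to the diagonal) is exact.  In positive degrees everything is governed by the
  injective shift N: the commutation D_q N = q N D_q gives d1 (N h, g) = N (d0' h - g), where
  d0' is the second component of d0.  The right complex is the left one conjugated by the
  exchange of the two inner variables.  Exactness holds for every q.\<close>

definition mul_x2_minus_x1 :: "(nat \<Rightarrow> nat \<Rightarrow> 'a::ab_group_add) \<Rightarrow> nat \<Rightarrow> nat \<Rightarrow> 'a" where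
  "mul_x2_minus_x1 a =
     (\<lambda>i j. (if j = 0 then 0 else a i (j - 1)) - (if i = 0 then 0 else a (i - 1) j))"

definition diagonal_fps :: "(nat \<Rightarrow> nat \<Rightarrow> 'a::comm_monoid_add) \<Rightarrow> 'a fps" where
  "diagonal_fps a = Abs_fps (\<lambda>k. \<Sum>i\<le>k. a i (k - i))"

lemma mul_x2_minus_x1_eq_0_iff: "mul_x2_minus_x1 a = 0 \<longleftrightarrow> a = 0"
proof
  assume zero: "mul_x2_minus_x1 a = 0"
  have "a i j = 0" for i j
  proof (induction i arbitrary: j)
    case 0
    show ?case using fun_cong[OF fun_cong[OF zero, of 0], of "Suc j"]
      by (simp add: mul_x2_minus_x1_def)
  next
    case (Suc i)
    show ?case using fun_cong[OF fun_cong[OF zero, of "Suc i"], of "Suc j"] Suc.IH[of "Suc j"]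
      by (simp add: mul_x2_minus_x1_def)
  qed
  then show "a = 0" by (simp add: fun_eq_iff)
qed (simp add: mul_x2_minus_x1_def zero_fun_def)

lemma diagonal_fps_mul_x2_minus_x1: "diagonal_fps (mul_x2_minus_x1 a) = 0"
proof (rule fps_ext)
  fix k
  show "fps_nth (diagonal_fps (mul_x2_minus_x1 a)) k = fps_nth 0 k"
  proof (cases k)
    case (Suc m)
    have "(\<Sum>i\<le>Suc m. if Suc m - i = 0 then 0 else a i (Suc m - i - 1)) = (\<Sum>i\<le>m. a i (m - i))"
      by (simp add: sum.atMost_Suc Suc_diff_le)
    moreover have "(\<Sum>i\<le>Suc m. if i = 0 then 0 else a (i - 1) (Suc m - i)) = (\<Sum>i\<le>m. a i (m - i))"
      by (subst sum.atMost_Suc_shift) simp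
    ultimately show ?thesis
      using Suc by (simp add: diagonal_fps_def mul_x2_minus_x1_def sum_subtractf)
  qed (simp add: diagonal_fps_def mul_x2_minus_x1_def)
qed

lemma mul_x2_minus_x1_solvable:
  assumes "diagonal_fps b = 0"
  shows "\<exists>a. mul_x2_minus_x1 a = b"
proof -
  have antidiagonal: "(\<Sum>i\<le>k. b i (k - i)) = 0" for k
    using arg_cong[OF assms, of "\<lambda>f. fps_nth f k"] by (simp add: diagonal_fps_def)
  \<comment> \<open>divide each homogeneous component of b, whose diagonal sum vanishes, by x2 - x1\<close>
  define a where "a = (\<lambda>i j. \<Sum>s\<le>i. b s (i + j + 1 - s))"
  have a_Suc: "a (Suc i) j = a i (Suc j) + b (Suc i) (Suc j)" for i j
  proof -
    have "(\<Sum>s\<le>i. b s (Suc i + j + 1 - s)) = a i (Suc j)"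
      unfolding a_def by (intro sum.cong) auto
    then show ?thesis by (simp add: a_def sum.atMost_Suc)
  qed
  have "mul_x2_minus_x1 a i j = b i j" for i j
  proof (cases i; cases j)
    assume "i = 0" "j = 0"
    then show ?thesis using antidiagonal[of 0] by (simp add: mul_x2_minus_x1_def)
  next
    fix j' assume "i = 0" "j = Suc j'"
    then show ?thesis by (simp add: mul_x2_minus_x1_def a_def)
  next
    fix i' assume i: "i = Suc i'" and "j = 0"
    have "a i' 0 + b (Suc i') 0 = 0"
      using antidiagonal[of "Suc i'"] by (simp add: a_def sum.atMost_Suc)
    then have "b (Suc i') 0 = - a i' 0" by (simp add: add_eq_0_iff)
    then show ?thesis using i \<open>j = 0\<close> by (simp add: mul_x2_minus_x1_def)
  next
    fix i' j' assume "i = Suc i'" "j = Suc j'"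
    then show ?thesis using a_Suc[of i' j'] by (simp add: mul_x2_minus_x1_def)
  qed
  then show ?thesis by blast
qed

lemma diagonal_fps_coefficients_in_x1: "diagonal_fps (\<lambda>i j. if j = 0 then fps_nth p i else 0) = p"
proof (rule fps_ext)
  fix k
  have "(\<Sum>i\<le>k. if k - i = 0 then fps_nth p i else 0) = (\<Sum>i\<le>k. if i = k then fps_nth p i else 0)"
    by (intro sum.cong) auto
  then show "fps_nth (diagonal_fps (\<lambda>i j. if j = 0 then fps_nth p i else 0)) k = fps_nth p k"
    by (simp add: diagonal_fps_def)
qed

definition lift0 :: "(nat \<Rightarrow> nat \<Rightarrow> complex) \<Rightarrow> ser3" where
  "lift0 a = (\<lambda>n. if n = 0 then a else (\<lambda>i j. 0))"

lemma lift0_0 [simp]: "lift0 0 = 0"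
  by (simp add: lift0_def zero_fun_def)

lemma ser3_decompose: "f = lift0 (f 0) + Nsh (\<lambda>n. f (Suc n))"
  by (simp add: lift0_def Nsh_def fun_eq_iff)

lemma inj_Nsh: "inj Nsh"
proof (rule injI)
  fix f g assume "Nsh f = Nsh g"
  then have "Nsh f (Suc n) = Nsh g (Suc n)" for n by simp
  then show "f = g" by (auto simp: Nsh_def)
qed

lemma Nsh_eq_0_iff: "Nsh f = 0 \<longleftrightarrow> f = 0"
proof -
  have "Nsh 0 = 0" by (simp add: Nsh_def fun_eq_iff)
  then show ?thesis using inj_Nsh by (metis inj_eq)
qed

lemma dy1_zeroth: "dy1 q fg 0 = mul_x2_minus_x1 (fst fg 0)"
  by (simp add: dy1_def mul_x2_minus_x1_def mul1_def mul2_def Dq_def Nsh_def fun_eq_iff)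

lemma dy1_lift0: "dy1 q (lift0 a, g) = lift0 (mul_x2_minus_x1 a) - Nsh g"
  by (simp add: dy1_def lift0_def mul_x2_minus_x1_def mul1_def mul2_def Dq_def fun_eq_iff)

lemma Dq_Nsh: "Dq q (Nsh f) = scal q (Nsh (Dq q f))"
proof (intro ext)
  fix n i j
  show "Dq q (Nsh f) n i j = scal q (Nsh (Dq q f)) n i j"
    by (cases n) (simp_all add: Dq_def Nsh_def scal_def)
qed

lemma Nsh_commute:
  "mul1 (Nsh f) = Nsh (mul1 f)" "mul2 (Nsh f) = Nsh (mul2 f)"
  "scal c (Nsh f) = Nsh (scal c f)" "Nsh (f - g) = Nsh f - Nsh g"
  by (simp_all add: mul1_def mul2_def Nsh_def scal_def fun_eq_iff)

lemma mul1_scal: "mul1 (scal c f) = scal c (mul1 f)"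
  by (simp add: mul1_def scal_def fun_eq_iff)

lemma dy1_Nsh: "dy1 q (Nsh h, g) = Nsh (snd (dy0 q h) - g)"
  by (simp add: dy0_def dy1_def Dq_Nsh Nsh_commute mul1_scal)

lemma piy_eq_diagonal_fps: "piy h = diagonal_fps (h 0)"
  by (simp add: piy_def diagonal_fps_def)

lemma exact4_left: "exact4 (dy0 q) (dy1 q) piy"
  unfolding exact4_def
proof (intro conjI)
  show "inj (dy0 q)"
  proof (rule injI)
    fix f g assume "dy0 q f = dy0 q g"
    then have "Nsh f = Nsh g" by (simp add: dy0_def)
    with inj_Nsh show "f = g" by (simp add: inj_eq)
  qed
  show "range (dy0 q) = {v. dy1 q v = 0}"
  proof (intro set_eqI iffI)
    fix v assume "v \<in> range (dy0 q)"
    then obtain h where "v = (Nsh h, snd (dy0 q h))" by (auto simp: dy0_def)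
    then show "v \<in> {v. dy1 q v = 0}" by (simp add: dy1_Nsh Nsh_eq_0_iff)
  next
    fix v assume "v \<in> {v. dy1 q v = 0}"
    moreover obtain f g where v: "v = (f, g)" by fastforce
    ultimately have cycle: "dy1 q (f, g) = 0" by simp
    then have "mul_x2_minus_x1 (f 0) = 0"
      using dy1_zeroth[of q "(f, g)"] by simp
    then have "f = Nsh (\<lambda>n. f (Suc n))"
      using ser3_decompose[of f] by (simp add: mul_x2_minus_x1_eq_0_iff)
    moreover from this have "g = snd (dy0 q (\<lambda>n. f (Suc n)))"
      using cycle dy1_Nsh[of q "\<lambda>n. f (Suc n)" g] by (simp add: Nsh_eq_0_iff)
    ultimately have "v = dy0 q (\<lambda>n. f (Suc n))"
      using v by (simp add: dy0_def)
    then show "v \<in> range (dy0 q)" by blast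
  qed
  show "range (dy1 q) = {h. piy h = 0}"
  proof (intro set_eqI iffI)
    fix h assume "h \<in> range (dy1 q)"
    then show "h \<in> {h. piy h = 0}"
      using dy1_zeroth diagonal_fps_mul_x2_minus_x1 by (auto simp: piy_eq_diagonal_fps)
  next
    fix h assume "h \<in> {h. piy h = 0}"
    then obtain a where "mul_x2_minus_x1 a = h 0"
      using mul_x2_minus_x1_solvable by (auto simp: piy_eq_diagonal_fps)
    then have "dy1 q (lift0 a, - (\<lambda>n. h (Suc n))) = lift0 (h 0) - Nsh (- (\<lambda>n. h (Suc n)))"
      by (simp add: dy1_lift0)
    also have "\<dots> = lift0 (h 0) + Nsh (\<lambda>n. h (Suc n))"
      by (simp add: Nsh_def fun_eq_iff)
    finally have "dy1 q (lift0 a, - (\<lambda>n. h (Suc n))) = h"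
      using ser3_decompose[of h] by simp
    then show "h \<in> range (dy1 q)" by (metis rangeI)
  qed
  show "surj piy"
  proof (rule surjI[where f = "\<lambda>p. lift0 (\<lambda>i j. if j = 0 then fps_nth p i else 0)"])
    fix p :: "complex fps"
    show "piy (lift0 (\<lambda>i j. if j = 0 then fps_nth p i else 0)) = p"
      by (simp add: piy_eq_diagonal_fps lift0_def diagonal_fps_coefficients_in_x1)
  qed
qed

lemma exact4_conj:
  assumes "exact4 d0 d1 p" and "bij A" "bij B" "bij C" "C 0 = 0"
    and "\<And>x. d0 (A x) = B (d0' x)" "\<And>v. d1 (B v) = C (d1' v)" "\<And>h. p' h = p (C h)"
  shows "exact4 d0' d1' p'"
proof -
  have "inj A" "inj B" "inj C" "surj A" "surj B" "surj C"
    using assms(2-4) by (simp_all add: bij_is_inj bij_is_surj)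
  from assms(1) have "inj d0" "range d0 = {v. d1 v = 0}" "range d1 = {h. p h = 0}" "surj p"
    by (simp_all add: exact4_def)
  have "B ` range d0' = range d0"
  proof -
    have "B ` range d0' = range (\<lambda>x. d0 (A x))" by (simp add: assms(6) range_composition)
    also have "\<dots> = range d0" using \<open>surj A\<close> by (simp add: range_composition)
    finally show ?thesis .
  qed
  have "C ` range d1' = range d1"
  proof -
    have "C ` range d1' = range (\<lambda>v. d1 (B v))" by (simp add: assms(7) range_composition)
    also have "\<dots> = range d1" using \<open>surj B\<close> by (simp add: range_composition)
    finally show ?thesis .
  qed
  have "inj (\<lambda>x. d0 (A x))"
    using inj_compose[OF \<open>inj d0\<close> \<open>inj A\<close>] by (simp add: o_def)
  then have "inj (B \<circ> d0')" by (simp add: assms(6) o_def)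
  then have "inj d0'" by (rule inj_on_imageI2)
  moreover have "range d0' = {v. d1' v = 0}"
  proof (intro set_eqI)
    fix v
    have "v \<in> range d0' \<longleftrightarrow> B v \<in> range d0"
      using \<open>inj B\<close> \<open>B ` range d0' = range d0\<close> by (metis inj_image_mem_iff)
    also have "\<dots> \<longleftrightarrow> C (d1' v) = C 0"
      using \<open>range d0 = {v. d1 v = 0}\<close> assms(5,7) by simp
    also have "\<dots> \<longleftrightarrow> d1' v = 0"
      using \<open>inj C\<close> by (simp add: inj_eq)
    finally show "v \<in> range d0' \<longleftrightarrow> v \<in> {v. d1' v = 0}" by simp
  qed
  moreover have "range d1' = {h. p' h = 0}"
  proof (intro set_eqI)
    fix h
    have "h \<in> range d1' \<longleftrightarrow> C h \<in> range d1"
      using \<open>inj C\<close> \<open>C ` range d1' = range d1\<close> by (metis inj_image_mem_iff)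
    then show "h \<in> range d1' \<longleftrightarrow> h \<in> {h. p' h = 0}"
      using \<open>range d1 = {h. p h = 0}\<close> assms(8) by simp
  qed
  moreover have "surj p'"
    using \<open>surj C\<close> \<open>surj p\<close> by (simp add: assms(8) range_composition)
  ultimately show ?thesis by (simp add: exact4_def)
qed

definition swap_inner :: "ser3 \<Rightarrow> ser3" where
  "swap_inner f = (\<lambda>n i j. f n j i)"

lemma swap_inner_swap_inner [simp]: "swap_inner (swap_inner f) = f"
  by (simp add: swap_inner_def)

definition swap_neg_pair :: "ser3 \<times> ser3 \<Rightarrow> ser3 \<times> ser3" where
  "swap_neg_pair = (\<lambda>(u, v). (- swap_inner v, - swap_inner u))"

lemma dy0_conj_dx0: "dy0 q (- swap_inner f) = swap_neg_pair (dx0 q f)"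
  by (auto simp: dy0_def dx0_def swap_neg_pair_def swap_inner_def mul1_def mul2_def Nsh_def Dq_def scal_def intro!: ext)

lemma dy1_conj_dx1: "dy1 q (swap_neg_pair fg) = swap_inner (dx1 q fg)"
  by (cases fg) (auto simp: dy1_def dx1_def swap_neg_pair_def swap_inner_def mul1_def mul2_def Nsh_def Dq_def intro!: ext)

lemma pix_eq_piy_swap_inner: "pix h = piy (swap_inner h)"
proof (rule fps_ext)
  fix k
  have "(\<Sum>i\<le>k. h 0 (k - i) i) = (\<Sum>i\<le>k. h 0 i (k - i))"
    by (rule sum.reindex_bij_witness[of _ "\<lambda>i. k - i" "\<lambda>i. k - i"]) auto
  then show "fps_nth (pix h) k = fps_nth (piy (swap_inner h)) k"
    by (simp add: pix_def piy_def swap_inner_def)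
qed

lemma exact4_right: "exact4 (dx0 q) (dx1 q) pix"
proof (rule exact4_conj[OF exact4_left[of q], where A = "\<lambda>f. - swap_inner f"
      and B = swap_neg_pair and C = swap_inner])
  show "bij (\<lambda>f. - swap_inner f)"
    by (rule involuntory_imp_bij) (simp add: swap_inner_def fun_Compl_def)
  show "bij swap_neg_pair"
    by (rule involuntory_imp_bij) (simp add: swap_neg_pair_def swap_inner_def fun_Compl_def split: prod.split)
  show "bij swap_inner"
    by (rule involuntory_imp_bij) simp
  show "swap_inner 0 = 0"
    by (simp add: swap_inner_def zero_fun_def)
  show "dy0 q (- swap_inner f) = swap_neg_pair (dx0 q f)" for f
    by (rule dy0_conj_dx0)
  show "dy1 q (swap_neg_pair fg) = swap_inner (dx1 q fg)" for fg
    by (rule dy1_conj_dx1)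
  show "pix h = piy (swap_inner h)" for h
    by (rule pix_eq_piy_swap_inner)
qed

theorem lemma5p1:
  fixes q :: complex
  assumes "q \<noteq> 0" and "q \<noteq> 1"
  shows "exact4 (dy0 q) (dy1 q) piy \<and> exact4 (dx0 q) (dx1 q) pix"
  using exact4_left exact4_right by blast

end
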